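(* Let $n\ge2$, let $F:\mathbf{R}^n\to\mathbf{R}$ be an integrand and let $O_F:=\mathrm{Hypo}(\mathcal{I}\circ\mathcal{D}(F))$. Then $\mathfrak{P}O_F=K_F$ and $\mathfrak{P}K_F=O_F$. In particular, $O_F$ is a compact convex set containing $0$ in its interior.
   Context: $\mathbb{S}^{n-1}$ is the unit sphere. An integrand is a lower semicontinuous $F:\mathbf{R}^n\to\mathbf{R}$ with $F(\lambda x)=\lambda F(x)$ for $\lambda\ge0$ and $F>0$ on $\mathbb{S}^{n-1}$. $K_F:=\bigcap_{v\in\mathbb{S}^{n-1}}\{z:\langle z,v\rangle\le F(v)\}$. For $\Omega\subseteq\mathbf{R}^n$, $\mathfrak{P}\Omega:=\{z:\langle z,x\rangle\le1\ \forall x\in\Omega\}$. Operators on integrands (defined on $\mathbb{S}^{n-1}$ and extended by 1-homogeneity): $\mathcal{W}(F)(v):=\inf_{w\in\mathbb{S}^{n-1},\langle v,w\rangle>0}F(w)/\langle v,w\rangle$, $\mathcal{A}(G)(v):=\sup_{w\in\mathbb{S}^{n-1}}G(w)\langle v,w\rangle$, $\mathcal{I}(G)(v):=1/G(v)$, and $\mathcal{D}(F):=\mathcal{A}(\mathcal{W}(F))$. For an integrand $G$, its polar hypograph is $\mathrm{Hypo}(G):=\{\lambda G(v)v: v\in\mathbb{S}^{n-1},\ 0\le\lambda\le1\}$. *)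

theory Defs
  imports "HOL-Analysis.Analysis"
begin

definition lower_semicont :: "('a::topological_space \<Rightarrow> real) \<Rightarrow> bool" where
  "lower_semicont F \<longleftrightarrow> (\<forall>x t. t < F x \<longrightarrow> (\<forall>\<^sub>F y in at x. t < F y))"

definition integrand :: "('a::euclidean_space \<Rightarrow> real) \<Rightarrow> bool" where
  "integrand F \<longleftrightarrow> lower_semicont F
     \<and> (\<forall>x (c::real). c \<ge> 0 \<longrightarrow> F (c *\<^sub>R x) = c * F x)
     \<and> (\<forall>v \<in> sphere 0 1. F v > 0)"

definition hom_ext :: "('a::real_normed_vector \<Rightarrow> real) \<Rightarrow> 'a \<Rightarrow> real" where
  "hom_ext f x = (if x = 0 then 0 else norm x * f (x /\<^sub>R norm x))"

definition opW :: "('a::euclidean_space \<Rightarrow> real) \<Rightarrow> 'a \<Rightarrow> real" where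
  "opW F = hom_ext (\<lambda>v. INF w \<in> {w \<in> sphere 0 1. inner v w > 0}. F w / inner v w)"

definition opA :: "('a::euclidean_space \<Rightarrow> real) \<Rightarrow> 'a \<Rightarrow> real" where
  "opA G = hom_ext (\<lambda>v. SUP w \<in> sphere 0 1. G w * inner v w)"

definition opI :: "('a::euclidean_space \<Rightarrow> real) \<Rightarrow> 'a \<Rightarrow> real" where
  "opI G = hom_ext (\<lambda>v. 1 / G v)"

definition opD :: "('a::euclidean_space \<Rightarrow> real) \<Rightarrow> 'a \<Rightarrow> real" where
  "opD F = opA (opW F)"

definition K_of :: "('a::euclidean_space \<Rightarrow> real) \<Rightarrow> 'a set" where
  "K_of F = (\<Inter>v \<in> sphere 0 1. {z. inner z v \<le> F v})"

definition polar :: "'a::euclidean_space set \<Rightarrow> 'a set" where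
  "polar \<Omega> = {z. \<forall>x \<in> \<Omega>. inner z x \<le> 1}"

definition Hypo :: "('a::euclidean_space \<Rightarrow> real) \<Rightarrow> 'a set" where
  "Hypo G = {(t * G v) *\<^sub>R v | v t. v \<in> sphere 0 1 \<and> 0 \<le> t \<and> t \<le> 1}"

end

theory Submission
  imports Defs
begin

text \<open>
  \<open>K\<^sub>F\<close> is closed and convex; it contains a ball around \<open>0\<close> because \<open>F\<close> is bounded below
  on the sphere by a positive constant (lower semicontinuity and compactness), and it is bounded
  because it lies in the slabs \<open>-F(-e\<^sub>i) \<le> \<langle>z, e\<^sub>i\<rangle> \<le> F(e\<^sub>i)\<close>. Its radial function is
  \<open>\<W>(F)\<close>, so \<open>\<D>(F) = \<A>(\<W>(F))\<close> is its support function \<open>h\<close>. A point \<open>t v\<close> (\<open>v\<close> a unit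
  vector, \<open>t \<ge> 0\<close>) lies in the polar of \<open>K\<^sub>F\<close> iff \<open>t h(v) \<le> 1\<close>, i.e. iff it lies in
  \<open>Hypo(1/h)\<close>; hence \<open>O\<^sub>F = \<P>K\<^sub>F\<close>, and bipolarity gives \<open>\<P>O\<^sub>F = K\<^sub>F\<close>.
\<close>

lemma lower_semicont_pos_imp_uniform_pos_bound:
  fixes F :: "'a::topological_space \<Rightarrow> real"
  assumes "lower_semicont F" "compact S" "\<forall>x\<in>S. F x > 0"
  shows "\<exists>r>0. \<forall>x\<in>S. r \<le> F x"
proof -
  have "\<exists>U. open U \<and> x \<in> U \<and> (\<forall>y\<in>U. F x / 2 < F y)" if x: "x \<in> S" for x
  proof -
    have "F x / 2 < F x" using assms(3) x by auto
    then have "\<forall>\<^sub>F y in at x. F x / 2 < F y"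
      using assms(1) unfolding lower_semicont_def by blast
    then obtain U where "open U" "x \<in> U" "\<forall>y\<in>U. y \<noteq> x \<longrightarrow> F x / 2 < F y"
      unfolding eventually_at_topological by blast
    with \<open>F x / 2 < F x\<close> show ?thesis by (intro exI[of _ U]) auto
  qed
  then obtain U where U: "\<And>x. x \<in> S \<Longrightarrow> open (U x) \<and> x \<in> U x \<and> (\<forall>y\<in>U x. F x / 2 < F y)"
    by metis
  obtain D where D: "D \<subseteq> S" "finite D" "S \<subseteq> (\<Union>x\<in>D. U x)"
    by (rule compactE_image[OF assms(2), of S U]) (use U in auto)
  define r where "r = Min (insert 1 ((\<lambda>x. F x / 2) ` D))"
  have "r > 0" unfolding r_def using D assms(3) by (subst Min_gr_iff) auto
  moreover have "r \<le> F y" if "y \<in> S" for y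
  proof -
    obtain x where x: "x \<in> D" "y \<in> U x" using D \<open>y \<in> S\<close> by auto
    have "r \<le> F x / 2" unfolding r_def using D x by (intro Min_le) auto
    also have "\<dots> < F y" using U[of x] x D by auto
    finally show ?thesis by simp
  qed
  ultimately show ?thesis by blast
qed

lemma hom_ext_unit: "norm v = 1 \<Longrightarrow> hom_ext f v = f v"
  unfolding hom_ext_def by auto

lemma polar_eq_INT: "polar K = (\<Inter>x\<in>K. {z. inner x z \<le> 1})"
  unfolding polar_def by (auto simp: inner_commute)

lemma closed_polar: "closed (polar K)"
  unfolding polar_eq_INT by (simp add: closed_INT closed_halfspace_le)

lemma convex_polar: "convex (polar K)"
  unfolding polar_eq_INT by (simp add: convex_INT convex_halfspace_le)

lemma polar_polar:
  fixes K :: "'a::euclidean_space set"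
  assumes "closed K" "convex K" "0 \<in> K"
  shows "polar (polar K) = K"
proof
  show "K \<subseteq> polar (polar K)" unfolding polar_def by (auto simp: inner_commute)
  show "polar (polar K) \<subseteq> K"
  proof
    fix z assume z: "z \<in> polar (polar K)"
    show "z \<in> K"
    proof (rule ccontr)
      assume "z \<notin> K"
      then obtain a b where ab: "inner a z < b" "\<forall>x\<in>K. inner a x > b"
        using separating_hyperplane_closed_point[OF assms(2,1)] by blast
      have b: "b < 0" using ab(2) assms(3) by force
      have "a /\<^sub>R b \<in> polar K"
        unfolding polar_def using ab(2) b by (auto simp: divide_simps)
      then have "inner z (a /\<^sub>R b) \<le> 1" using z unfolding polar_def by blast
      then have "inner a z / b \<le> 1" by (simp add: inner_commute divide_inverse mult.commute)
      then show False using ab(1) b by (simp add: divide_simps)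
    qed
  qed
qed

lemma zero_in_interior_polar:
  fixes K :: "'a::euclidean_space set"
  assumes "bounded K"
  shows "0 \<in> interior (polar K)"
proof -
  obtain R where R: "R > 0" "\<And>x. x \<in> K \<Longrightarrow> norm x \<le> R"
    using assms unfolding bounded_pos by blast
  have "ball 0 (1 / R) \<subseteq> polar K"
    unfolding polar_def
  proof (intro subsetI CollectI ballI)
    fix y x :: 'a assume "y \<in> ball 0 (1 / R)" "x \<in> K"
    have "inner y x \<le> norm y * norm x" by (rule norm_cauchy_schwarz)
    also have "\<dots> \<le> (1 / R) * R"
      using \<open>y \<in> ball 0 (1 / R)\<close> R(1) R(2)[OF \<open>x \<in> K\<close>] by (intro mult_mono) auto
    finally show "inner y x \<le> 1" using R(1) by simp
  qed
  then show ?thesis using R(1) by (meson centre_in_ball interior_maximal open_ball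
        zero_less_divide_1_iff subsetD)
qed

lemma bounded_polar:
  fixes K :: "'a::euclidean_space set"
  assumes "0 \<in> interior K"
  shows "bounded (polar K)"
proof -
  obtain r where r: "r > 0" "cball 0 r \<subseteq> K"
    using assms mem_interior_cball by blast
  have "norm z \<le> 1 / r" if z: "z \<in> polar K" for z
  proof (cases "z = 0")
    case False
    have "(r / norm z) *\<^sub>R z \<in> K" using r by auto
    then have "inner z ((r / norm z) *\<^sub>R z) \<le> 1" using z unfolding polar_def by blast
    then have "r * norm z \<le> 1"
      using False by (simp add: power2_norm_eq_inner[symmetric] power2_eq_square)
    then show ?thesis using r(1) by (simp add: pos_le_divide_eq mult.commute)
  qed (use r in simp)
  then show ?thesis unfolding bounded_iff by blast
qed

definition support_fun :: "'a::euclidean_space set \<Rightarrow> 'a \<Rightarrow> real" where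
  "support_fun K v = (SUP z\<in>K. inner v z)"

lemma bounded_imp_bdd_above_inner:
  fixes K :: "'a::euclidean_space set"
  assumes "bounded K"
  shows "bdd_above ((\<lambda>z. inner v z) ` K)"
proof -
  obtain R where R: "\<And>z. z \<in> K \<Longrightarrow> norm z \<le> R"
    using assms unfolding bounded_iff by blast
  have "inner v z \<le> norm v * R" if "z \<in> K" for z
  proof -
    have "inner v z \<le> norm v * norm z" by (rule norm_cauchy_schwarz)
    also have "\<dots> \<le> norm v * R" using R[OF that] by (simp add: mult_left_mono)
    finally show ?thesis .
  qed
  then show ?thesis by (rule bdd_aboveI2)
qed

lemma inner_le_support_fun: "bounded K \<Longrightarrow> z \<in> K \<Longrightarrow> inner v z \<le> support_fun K v"
  unfolding support_fun_def by (rule cSUP_upper) (auto intro: bounded_imp_bdd_above_inner)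

lemma support_fun_pos:
  fixes K :: "'a::euclidean_space set"
  assumes "bounded K" "0 \<in> interior K" "v \<noteq> 0"
  shows "0 < support_fun K v"
proof -
  obtain r where r: "r > 0" "cball 0 r \<subseteq> K"
    using assms(2) mem_interior_cball by blast
  then have "(r / norm v) *\<^sub>R v \<in> K" by auto
  then have "inner v ((r / norm v) *\<^sub>R v) \<le> support_fun K v"
    by (rule inner_le_support_fun[OF assms(1)])
  moreover have "inner v ((r / norm v) *\<^sub>R v) = r * norm v"
    using assms(3) by (simp add: power2_norm_eq_inner[symmetric] power2_eq_square)
  moreover have "0 < r * norm v" using r(1) assms(3) by simp
  ultimately show ?thesis by linarith
qed

lemma scaleR_mem_polar_iff:
  fixes K :: "'a::euclidean_space set"
  assumes "bounded K" "K \<noteq> {}" "t \<ge> 0"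
  shows "t *\<^sub>R v \<in> polar K \<longleftrightarrow> t * support_fun K v \<le> 1"
proof (cases "t = 0")
  case False
  then have t: "t > 0" using assms(3) by simp
  have "t *\<^sub>R v \<in> polar K \<longleftrightarrow> (\<forall>z\<in>K. inner v z \<le> 1 / t)"
    unfolding polar_def using t by (simp add: pos_le_divide_eq mult.commute)
  also have "\<dots> \<longleftrightarrow> support_fun K v \<le> 1 / t"
    unfolding support_fun_def
    using cSUP_le_iff[OF assms(2) bounded_imp_bdd_above_inner[OF assms(1)]] by simp
  also have "\<dots> \<longleftrightarrow> t * support_fun K v \<le> 1"
    using t by (simp add: pos_le_divide_eq mult.commute)
  finally show ?thesis .
qed (simp add: polar_def)

lemma Hypo_opI_support_fun_eq_polar:
  fixes K :: "'a::euclidean_space set"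
  assumes "bounded K" "0 \<in> interior K" "\<forall>v\<in>sphere 0 1. G v = support_fun K v"
  shows "Hypo (opI G) = polar K"
proof -
  have K: "K \<noteq> {}" using assms(2) interior_subset by blast
  have h_pos: "0 < G v" and opI_G: "opI G v = 1 / G v" if "v \<in> sphere 0 1" for v
  proof -
    have "v \<noteq> 0" using that by auto
    then show "0 < G v" using that assms(3) support_fun_pos[OF assms(1,2)] by simp
    show "opI G v = 1 / G v" using that by (simp add: opI_def hom_ext_unit)
  qed
  show ?thesis
  proof
    show "Hypo (opI G) \<subseteq> polar K"
    proof
      fix x assume "x \<in> Hypo (opI G)"
      then obtain v s where vs: "v \<in> sphere 0 1" "0 \<le> s" "s \<le> 1" "x = (s * opI G v) *\<^sub>R v"
        unfolding Hypo_def by auto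
      then have "x = (s / G v) *\<^sub>R v" by (simp add: opI_G)
      moreover have "s / G v * support_fun K v \<le> 1"
        using vs h_pos[OF vs(1)] assms(3) by simp
      ultimately show "x \<in> polar K"
        using scaleR_mem_polar_iff[OF assms(1) K] h_pos[OF vs(1)] vs(2) by simp
    qed
    show "polar K \<subseteq> Hypo (opI G)"
    proof
      fix x assume x: "x \<in> polar K"
      show "x \<in> Hypo (opI G)"
      proof (cases "x = 0")
        case True
        obtain v :: 'a where "norm v = 1" using vector_choose_size[of 1] by auto
        then show ?thesis unfolding Hypo_def using True
          by (intro CollectI exI[of _ v] exI[of _ 0]) auto
      next
        case False
        define v where "v = x /\<^sub>R norm x"
        have v: "v \<in> sphere 0 1" and xv: "norm x *\<^sub>R v = x" using False by (auto simp: v_def)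
        have "norm x * G v \<le> 1"
          using x scaleR_mem_polar_iff[OF assms(1) K, of "norm x" v] assms(3) v by (simp add: xv)
        moreover have "0 \<le> norm x * G v" using h_pos[OF v] by simp
        moreover have "x = ((norm x * G v) * opI G v) *\<^sub>R v"
          using opI_G[OF v] h_pos[OF v] xv by simp
        ultimately show ?thesis unfolding Hypo_def using v by blast
      qed
    qed
  qed
qed

lemma closed_K_of: "closed (K_of F)"
  unfolding K_of_def
  by (intro closed_INT) (simp add: closed_Collect_le continuous_intros)

lemma convex_K_of: "convex (K_of F)"
  unfolding K_of_def by (intro convex_INT) (simp add: convex_halfspace_le inner_commute)

lemma cball_subset_K_of:
  fixes F :: "'a::euclidean_space \<Rightarrow> real"
  assumes "\<forall>v\<in>sphere 0 1. r \<le> F v"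
  shows "cball 0 r \<subseteq> K_of F"
proof (unfold K_of_def, intro subsetI INT_I CollectI)
  fix z v :: 'a assume "z \<in> cball 0 r" "v \<in> sphere 0 1"
  then have "inner z v \<le> r" using norm_cauchy_schwarz[of z v] by simp
  moreover have "r \<le> F v" using assms \<open>v \<in> sphere 0 1\<close> by blast
  ultimately show "inner z v \<le> F v" by linarith
qed

lemma K_of_subset_cball:
  fixes F :: "'a::euclidean_space \<Rightarrow> real"
  assumes "\<forall>v\<in>sphere 0 1. 0 \<le> F v"
  shows "K_of F \<subseteq> cball 0 (\<Sum>b\<in>Basis. F b + F (- b))"
proof
  fix z assume z: "z \<in> K_of F"
  have "norm z \<le> (\<Sum>b\<in>Basis. \<bar>inner z b\<bar>)" by (rule norm_le_l1)
  also have "\<dots> \<le> (\<Sum>b\<in>Basis. F b + F (- b))"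
  proof (rule sum_mono)
    fix b :: 'a assume "b \<in> Basis"
    then have b: "b \<in> sphere 0 1" "- b \<in> sphere 0 1" by auto
    then have "inner z b \<le> F b" "inner z (- b) \<le> F (- b)"
      using z unfolding K_of_def by blast+
    moreover have "0 \<le> F b" "0 \<le> F (- b)" using assms b by blast+
    ultimately show "\<bar>inner z b\<bar> \<le> F b + F (- b)" using inner_minus_right[of z b] by linarith
  qed
  finally show "z \<in> cball 0 (\<Sum>b\<in>Basis. F b + F (- b))" by simp
qed

lemma bounded_K_of:
  fixes F :: "'a::euclidean_space \<Rightarrow> real"
  assumes "\<forall>v\<in>sphere 0 1. 0 \<le> F v"
  shows "bounded (K_of F)"
  using K_of_subset_cball[OF assms] bounded_cball bounded_subset by blast

lemma scaleR_mem_K_of_iff_opW: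
  fixes F :: "'a::euclidean_space \<Rightarrow> real"
  assumes F: "\<forall>w\<in>sphere 0 1. 0 \<le> F w" and v: "v \<in> sphere 0 1" and "l \<ge> 0"
  shows "l *\<^sub>R v \<in> K_of F \<longleftrightarrow> l \<le> opW F v"
proof -
  define P where "P = {w \<in> sphere 0 1. inner v w > 0}"
  have opW_v: "opW F v = (INF w \<in> P. F w / inner v w)"
    using v by (simp add: opW_def P_def hom_ext_unit)
  have "v \<in> P" using v by (simp add: P_def power2_norm_eq_inner[symmetric])
  then have P: "P \<noteq> {}" by blast
  have bdd: "bdd_below ((\<lambda>w. F w / inner v w) ` P)"
    using F by (intro bdd_belowI[of _ 0]) (auto simp: P_def)
  have "l *\<^sub>R v \<in> K_of F \<longleftrightarrow> (\<forall>w\<in>sphere 0 1. l * inner v w \<le> F w)"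
    unfolding K_of_def by (auto simp: inner_commute)
  also have "\<dots> \<longleftrightarrow> (\<forall>w\<in>P. l * inner v w \<le> F w)"
  proof -
    have "l * inner v w \<le> F w" if "w \<in> sphere 0 1" "w \<notin> P" for w
    proof -
      have "l * inner v w \<le> 0"
        using that \<open>l \<ge> 0\<close> by (simp add: P_def mult_nonneg_nonpos)
      also have "0 \<le> F w" using F that(1) by blast
      finally show ?thesis .
    qed
    then show ?thesis unfolding P_def by blast
  qed
  also have "\<dots> \<longleftrightarrow> (\<forall>w\<in>P. l \<le> F w / inner v w)"
    by (auto simp: P_def pos_le_divide_eq)
  also have "\<dots> \<longleftrightarrow> l \<le> opW F v"
    unfolding opW_v using le_cINF_iff[OF P bdd] by simp
  finally show ?thesis .
qed

lemma opD_eq_support_fun_K_of: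
  fixes F :: "'a::euclidean_space \<Rightarrow> real"
  assumes F: "\<forall>w\<in>sphere 0 1. 0 \<le> F w" and v: "v \<in> sphere 0 1"
  shows "opD F v = support_fun (K_of F) v"
proof -
  define K where "K = K_of F"
  have bounded: "bounded K" unfolding K_def using F by (rule bounded_K_of)
  have "0 \<in> K" unfolding K_def using cball_subset_K_of[of 0 F] F by auto
  have opW_nonneg: "0 \<le> opW F w" and opW_mem: "opW F w *\<^sub>R w \<in> K" if "w \<in> sphere 0 1" for w
    using scaleR_mem_K_of_iff_opW[OF F that, of 0] \<open>0 \<in> K\<close>
      scaleR_mem_K_of_iff_opW[OF F that, of "opW F w"] by (auto simp: K_def)
  define g where "g w = opW F w * inner v w" for w
  have opD_v: "opD F v = (SUP w \<in> sphere 0 1. g w)"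
    using v by (simp add: opD_def opA_def g_def hom_ext_unit)
  have g_le: "g w \<le> support_fun K v" if "w \<in> sphere 0 1" for w
    using inner_le_support_fun[OF bounded opW_mem[OF that]] by (simp add: g_def)
  then have bdd: "bdd_above (g ` sphere 0 1)" by (rule bdd_aboveI2)
  have "inner v z \<le> (SUP w \<in> sphere 0 1. g w)" if z: "z \<in> K" for z
  proof (cases "inner v z \<le> 0")
    case True
    have "0 \<le> g v"
      using opW_nonneg[OF v] v by (simp add: g_def power2_norm_eq_inner[symmetric])
    also have "\<dots> \<le> (SUP w \<in> sphere 0 1. g w)" by (rule cSUP_upper[OF v bdd])
    finally show ?thesis using True by linarith
  next
    case False
    then have "z \<noteq> 0" by auto
    define w where "w = z /\<^sub>R norm z"
    have w: "w \<in> sphere 0 1" and zw: "z = norm z *\<^sub>R w" using \<open>z \<noteq> 0\<close> by (auto simp: w_def)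
    have "norm z \<le> opW F w"
      using scaleR_mem_K_of_iff_opW[OF F w, of "norm z"] z zw by (simp add: K_def)
    have vz: "inner v z = norm z * inner v w" by (subst zw) simp
    with False have "0 < inner v w" by (simp add: not_le zero_less_mult_iff)
    with vz \<open>norm z \<le> opW F w\<close> have "inner v z \<le> g w"
      unfolding g_def by (metis less_imp_le mult_right_mono)
    also have "\<dots> \<le> (SUP w \<in> sphere 0 1. g w)" by (rule cSUP_upper[OF w bdd])
    finally show ?thesis .
  qed
  then have "support_fun K v \<le> opD F v"
    unfolding support_fun_def opD_v using \<open>0 \<in> K\<close> by (intro cSUP_least) auto
  moreover have "opD F v \<le> support_fun K v"
    unfolding opD_v using v g_le by (intro cSUP_least) auto
  ultimately show ?thesis by (simp add: K_def)
qed

theorem lemma3p1: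
  fixes F :: "'a::euclidean_space \<Rightarrow> real"
  assumes "DIM('a) \<ge> 2"
    and "integrand F"
  defines "O_F \<equiv> Hypo (opI (opD F))"
  shows "polar O_F = K_of F \<and> polar (K_of F) = O_F
         \<and> compact O_F \<and> convex O_F \<and> 0 \<in> interior O_F"
proof -
  obtain r where r: "r > 0" "\<forall>v\<in>sphere 0 1. r \<le> F v"
    using lower_semicont_pos_imp_uniform_pos_bound[OF _ compact_sphere] assms(2)
    unfolding integrand_def by blast
  then have F_nonneg: "\<forall>v\<in>sphere 0 1. 0 \<le> F v" by (meson less_le_trans less_imp_le)
  define K where "K = K_of F"
  have K_bounded: "bounded K" unfolding K_def using F_nonneg by (rule bounded_K_of)
  have K_interior: "0 \<in> interior K"
    unfolding K_def using cball_subset_K_of[OF r(2)] r(1) mem_interior_cball by blast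
  have O_F: "O_F = polar K"
    unfolding O_F_def K_def
    by (rule Hypo_opI_support_fun_eq_polar)
      (use K_bounded K_interior opD_eq_support_fun_K_of[OF F_nonneg] in \<open>simp_all add: K_def\<close>)
  have "polar (polar K) = K"
    unfolding K_def
    by (rule polar_polar[OF closed_K_of convex_K_of])
      (use K_interior interior_subset in \<open>auto simp: K_def\<close>)
  moreover have "compact (polar K)"
    using bounded_polar[OF K_interior] closed_polar by (simp add: compact_eq_bounded_closed)
  ultimately show ?thesis
    unfolding O_F K_def[symmetric] using convex_polar zero_in_interior_polar[OF K_bounded] by blast
qed

end
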